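(* For $n\ge2$ let $R_n$ be the set of words $\rho$ of length $n$ over the alphabet $\{0,1\}$ such that $\rho$ does not start with $01$, $\rho$ does not end with $10$, and $\rho$ does not contain $101$ as a factor. Then $|R_n|=\Theta(\alpha^n)$, where $\alpha\approx1.755$ is the unique positive root of the polynomial $x^4-x^3-x^2-1$.
   Context: $|R_n|=\Theta(\alpha^n)$ means there exist positive constants $c_1,c_2$ with $c_1\alpha^n\le|R_n|\le c_2\alpha^n$ for all $n\ge2$. *)

theory Defs
  imports Complex_Main "HOL-Library.Sublist"
begin

text \<open>Binary words are lists of booleans; False encodes 0 and True encodes 1.\<close>

definition R :: "nat \<Rightarrow> bool list set" where
  "R n = {\<rho>. length \<rho> = n
             \<and> \<not> prefix [False, True] \<rho>
             \<and> \<not> suffix [True, False] \<rho>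
             \<and> \<not> sublist [True, False, True] \<rho>}"

definition alpha :: real where
  "alpha = (THE x. x > 0 \<and> x ^ 4 - x ^ 3 - x ^ 2 - 1 = 0)"

end

theory Submission
  imports Defs
begin

text \<open>
  Drop the boundary conditions and let A n be the binary words of length n avoiding 101.
  A word of A n extends to the left by 0 always, and by 1 unless it starts with 01. The
  transfer matrix on the three states "starts with 01", "starts with 1", "otherwise" has
  Perron root \<alpha>, the positive root of x (x - 1)^2 = 1 (the quartic factors as
  (x + 1) (x (x - 1)^2 - 1)). Weighting each word by the entry of a positive eigenvector for
  its state, all entries lying in [1, \<alpha>], the total weight of A n is exactly \<alpha>^(n + 1);
  hence \<alpha>^n \<le> |A n| \<le> \<alpha>^(n + 1). Finally R n is contained in A n, and padding the
  words of A (n - 4) with 00 on both sides maps them injectively into R n.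
\<close>

lemma quartic_factor:
  fixes x :: real
  shows "x ^ 4 - x ^ 3 - x ^ 2 - 1 = (x + 1) * (x * (x - 1) ^ 2 - 1)"
  by (simp add: algebra_simps power2_eq_square power3_eq_cube power4_eq_xxxx)

lemma quartic_root_iff:
  fixes x :: real
  assumes "x > 0"
  shows "x ^ 4 - x ^ 3 - x ^ 2 - 1 = 0 \<longleftrightarrow> x * (x - 1) ^ 2 = 1"
  using assms by (simp add: quartic_factor)

lemma cubic_root_gt_1:
  fixes x :: real
  assumes "x > 0" and "x * (x - 1) ^ 2 = 1"
  shows "x > 1"
proof (rule ccontr)
  assume "\<not> x > 1"
  then have "x * (x - 1) ^ 2 \<le> 1 * (x - 1) ^ 2"
    by (intro mult_right_mono) auto
  also have "\<dots> < 1"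
    using \<open>x > 0\<close> \<open>\<not> x > 1\<close> by (simp add: abs_square_less_1)
  finally show False
    using assms(2) by simp
qed

lemma cubic_strict_mono_ge_1:
  fixes x y :: real
  assumes "1 \<le> x" and "x < y"
  shows "x * (x - 1) ^ 2 < y * (y - 1) ^ 2"
proof -
  have "x * (x - 1) ^ 2 \<le> x * (y - 1) ^ 2"
    using assms by (intro mult_left_mono power_mono) auto
  also have "\<dots> < y * (y - 1) ^ 2"
    using assms by (intro mult_strict_right_mono) auto
  finally show ?thesis .
qed

lemma ex1_positive_quartic_root: "\<exists>!x::real. x > 0 \<and> x ^ 4 - x ^ 3 - x ^ 2 - 1 = 0"
proof -
  have "\<exists>x\<ge>1. x \<le> 2 \<and> (\<lambda>x::real. x * (x - 1) ^ 2 - 1) x = 0"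
    by (rule IVT) (auto intro!: continuous_intros)
  then obtain x :: real where "x \<ge> 1" and root_x: "x * (x - 1) ^ 2 = 1"
    by auto
  show ?thesis
  proof (rule ex1I)
    show "x > 0 \<and> x ^ 4 - x ^ 3 - x ^ 2 - 1 = 0"
      using \<open>x \<ge> 1\<close> root_x quartic_root_iff by auto
  next
    fix y :: real
    assume "y > 0 \<and> y ^ 4 - y ^ 3 - y ^ 2 - 1 = 0"
    then have "y > 1" and root_y: "y * (y - 1) ^ 2 = 1"
      using quartic_root_iff cubic_root_gt_1 by blast+
    show "y = x"
      using cubic_strict_mono_ge_1[of x y] cubic_strict_mono_ge_1[of y x]
        \<open>x \<ge> 1\<close> \<open>y > 1\<close> root_x root_y
      by (cases x y rule: linorder_cases) auto
  qed
qed

lemma alpha_root: "alpha > 0" "alpha * (alpha - 1) ^ 2 = 1"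
proof -
  have "alpha > 0 \<and> alpha ^ 4 - alpha ^ 3 - alpha ^ 2 - 1 = 0"
    unfolding alpha_def by (rule theI'[OF ex1_positive_quartic_root])
  then show "alpha > 0" "alpha * (alpha - 1) ^ 2 = 1"
    using quartic_root_iff by blast+
qed

lemma alpha_gt_1: "alpha > 1"
  using cubic_root_gt_1 alpha_root by blast

lemma alpha_le_2: "alpha \<le> 2"
proof (rule ccontr)
  assume "\<not> alpha \<le> 2"
  then have "2 * (2 - 1) ^ 2 < alpha * (alpha - 1) ^ 2"
    by (intro cubic_strict_mono_ge_1) auto
  with alpha_root show False by simp
qed

lemma alpha_times_pred_bounds: "1 \<le> alpha * (alpha - 1)" "alpha * (alpha - 1) \<le> alpha"
proof -
  have "alpha * (alpha - 1) = 1 / (alpha - 1)"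
    using alpha_root(2) alpha_gt_1 by (simp add: field_simps power2_eq_square)
  then show "1 \<le> alpha * (alpha - 1)"
    using alpha_gt_1 alpha_le_2 by simp
  show "alpha * (alpha - 1) \<le> alpha"
    using alpha_gt_1 alpha_le_2 by simp
qed

definition avoid_101 :: "nat \<Rightarrow> bool list set" where
  "avoid_101 n = {w. length w = n \<and> \<not> sublist [True, False, True] w}"

lemma finite_avoid_101: "finite (avoid_101 n)"
proof (rule finite_subset)
  show "avoid_101 n \<subseteq> {w. set w \<subseteq> UNIV \<and> length w = n}"
    unfolding avoid_101_def by auto
qed (intro finite_lists_length_eq finite_UNIV)

lemma sublist_101_Cons_False:
  "sublist [True, False, True] (False # w) \<longleftrightarrow> sublist [True, False, True] w"
  by (simp add: sublist_Cons_right)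

lemma sublist_101_Cons_True:
  "sublist [True, False, True] (True # w) \<longleftrightarrow>
     prefix [False, True] w \<or> sublist [True, False, True] w"
  by (simp add: sublist_Cons_right)

lemma sublist_101_snoc_False:
  "sublist [True, False, True] (w @ [False]) \<longleftrightarrow> sublist [True, False, True] w"
proof -
  have "sublist [True, False, True] (w @ [False])
          \<longleftrightarrow> sublist (rev [True, False, True]) (rev (w @ [False]))"
    by (simp only: sublist_rev)
  also have "\<dots> \<longleftrightarrow> sublist [True, False, True] (rev w)"
    by (simp add: sublist_101_Cons_False)
  also have "\<dots> \<longleftrightarrow> sublist [True, False, True] w"
    using sublist_rev_right[of "[True, False, True]" w] by simp
  finally show ?thesis .
qed

lemma avoid_101_Suc:
  "avoid_101 (Suc n) =
     Cons False ` avoid_101 n \<union> Cons True ` {w \<in> avoid_101 n. \<not> prefix [False, True] w}"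
proof (intro equalityI subsetI)
  fix v assume v: "v \<in> avoid_101 (Suc n)"
  then obtain x w where "v = x # w"
    unfolding avoid_101_def by (cases v) auto
  with v show "v \<in> Cons False ` avoid_101 n \<union>
                   Cons True ` {w \<in> avoid_101 n. \<not> prefix [False, True] w}"
    unfolding avoid_101_def
    by (cases x) (auto simp: sublist_101_Cons_False sublist_101_Cons_True)
qed (auto simp: avoid_101_def sublist_101_Cons_False sublist_101_Cons_True)

definition weight :: "bool list \<Rightarrow> real" where
  "weight w = (if prefix [False, True] w then 1
               else if w \<noteq> [] \<and> hd w then alpha * (alpha - 1)
               else alpha)"

lemma weight_bounds: "1 \<le> weight w" "weight w \<le> alpha"
  using alpha_gt_1 alpha_times_pred_bounds unfolding weight_def by auto

lemma weight_Cons: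
  "weight (False # w) + (if prefix [False, True] w then 0 else weight (True # w)) = alpha * weight w"
proof -
  have root: "alpha * (alpha * (alpha - 1)) = 1 + alpha * (alpha - 1)"
    using alpha_root(2) by (simp add: algebra_simps power2_eq_square)
  show ?thesis
  proof (cases w)
    case (Cons x v)
    with root show ?thesis
      by (cases x; cases v) (auto simp: weight_def algebra_simps)
  qed (simp add: weight_def algebra_simps)
qed

lemma sum_weight_avoid_101: "(\<Sum>w\<in>avoid_101 n. weight w) = alpha ^ Suc n"
proof (induction n)
  case 0
  have "avoid_101 0 = {[]}"
    unfolding avoid_101_def by auto
  then show ?case
    by (simp add: weight_def)
next
  case (Suc n)
  let ?S = "{w \<in> avoid_101 n. \<not> prefix [False, True] w}"
  have "(\<Sum>w\<in>avoid_101 (Suc n). weight w)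
          = (\<Sum>w\<in>Cons False ` avoid_101 n. weight w) + (\<Sum>w\<in>Cons True ` ?S. weight w)"
    unfolding avoid_101_Suc by (rule sum.union_disjoint) (auto simp: finite_avoid_101)
  also have "\<dots> = (\<Sum>w\<in>avoid_101 n. weight (False # w)) + (\<Sum>w\<in>?S. weight (True # w))"
    by (simp add: sum.reindex)
  also have "(\<Sum>w\<in>?S. weight (True # w))
               = (\<Sum>w\<in>avoid_101 n. if prefix [False, True] w then 0 else weight (True # w))"
    unfolding sum.inter_filter[OF finite_avoid_101] by (rule sum.cong) auto
  also have "(\<Sum>w\<in>avoid_101 n. weight (False # w)) + \<dots> = (\<Sum>w\<in>avoid_101 n. alpha * weight w)"
    by (simp add: sum.distrib[symmetric] weight_Cons)
  also have "\<dots> = alpha ^ Suc (Suc n)"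
    by (simp add: sum_distrib_left[symmetric] Suc)
  finally show ?case .
qed

lemma card_avoid_101_bounds:
  "alpha ^ n \<le> real (card (avoid_101 n))" "real (card (avoid_101 n)) \<le> alpha ^ Suc n"
proof -
  have "alpha ^ Suc n \<le> (\<Sum>w\<in>avoid_101 n. alpha)"
    unfolding sum_weight_avoid_101[symmetric] by (intro sum_mono weight_bounds)
  then show "alpha ^ n \<le> real (card (avoid_101 n))"
    using alpha_root(1) by simp
  have "(\<Sum>w\<in>avoid_101 n. 1) \<le> (\<Sum>w\<in>avoid_101 n. weight w)"
    by (intro sum_mono weight_bounds)
  then show "real (card (avoid_101 n)) \<le> alpha ^ Suc n"
    by (simp add: sum_weight_avoid_101)
qed

lemma R_subset_avoid_101: "R n \<subseteq> avoid_101 n"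
  unfolding R_def avoid_101_def by auto

lemma finite_R: "finite (R n)"
  using R_subset_avoid_101 finite_avoid_101 by (rule finite_subset)

lemma pad_zeros_in_R:
  assumes "w \<in> avoid_101 n"
  shows "[False, False] @ w @ [False, False] \<in> R (n + 4)"
proof -
  have "\<not> sublist [True, False, True] (w @ [False, False])"
    using assms sublist_101_snoc_False[of w] sublist_101_snoc_False[of "w @ [False]"]
    unfolding avoid_101_def by simp
  then show ?thesis
    using assms unfolding R_def avoid_101_def
    by (auto simp: sublist_101_Cons_False suffix_def)
qed

lemma card_avoid_101_le_card_R: "card (avoid_101 n) \<le> card (R (n + 4))"
proof -
  let ?pad = "\<lambda>w. [False, False] @ w @ [False, False]"
  have "card (avoid_101 n) = card (?pad ` avoid_101 n)"
    by (rule card_image[symmetric]) (auto intro: inj_onI)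
  also have "\<dots> \<le> card (R (n + 4))"
    using pad_zeros_in_R by (intro card_mono finite_R) auto
  finally show ?thesis .
qed

lemma replicate_False_in_R: "replicate n False \<in> R n"
  using set_mono_prefix[of "[False, True]" "replicate n False"]
    set_mono_suffix[of "[True, False]" "replicate n False"]
    set_mono_sublist[of "[True, False, True]" "replicate n False"]
  unfolding R_def by auto

lemma card_R_upper: "real (card (R n)) \<le> alpha ^ Suc n"
proof -
  have "card (R n) \<le> card (avoid_101 n)"
    by (rule card_mono[OF finite_avoid_101 R_subset_avoid_101])
  then show ?thesis
    using card_avoid_101_bounds(2)[of n] by linarith
qed

lemma card_R_lower: "alpha ^ n \<le> alpha ^ 4 * real (card (R n))"
proof (cases "n \<ge> 4")
  case True
  then obtain m where n: "n = m + 4"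
    by (metis add.commute le_Suc_ex)
  have "alpha ^ m \<le> real (card (R n))"
    using card_avoid_101_bounds(1)[of m] card_avoid_101_le_card_R[of m] n
    by (meson order_trans of_nat_le_iff)
  then show ?thesis
    using alpha_root(1) mult_left_mono[of "alpha ^ m" _ "alpha ^ 4"] n
    by (metis power_add mult.commute zero_le_power less_imp_le)
next
  case False
  have "alpha ^ n \<le> alpha ^ 4"
    using False alpha_gt_1 by (intro power_increasing) simp_all
  also have "\<dots> \<le> alpha ^ 4 * real (card (R n))"
  proof -
    have "card (R n) > 0"
      unfolding card_gt_0_iff using replicate_False_in_R finite_R by blast
    then show ?thesis
      using alpha_root(1) mult_left_mono[of 1 "real (card (R n))" "alpha ^ 4"] by simp
  qed
  finally show ?thesis .
qed

theorem lemma8p1: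
  shows "(\<exists>!x::real. x > 0 \<and> x ^ 4 - x ^ 3 - x ^ 2 - 1 = 0)
    \<and> (\<exists>c1 c2 :: real. c1 > 0 \<and> c2 > 0 \<and>
         (\<forall>n::nat. n \<ge> 2 \<longrightarrow>
            c1 * alpha ^ n \<le> real (card (R n)) \<and> real (card (R n)) \<le> c2 * alpha ^ n))"
proof (intro conjI ex1_positive_quartic_root)
  have "1 / alpha ^ 4 * alpha ^ n \<le> real (card (R n))" for n
    using card_R_lower[of n] alpha_root(1) by (simp add: pos_divide_le_eq mult.commute)
  moreover have "real (card (R n)) \<le> alpha * alpha ^ n" for n
    using card_R_upper[of n] by simp
  moreover have "1 / alpha ^ 4 > 0" "alpha > 0"
    using alpha_root(1) by simp_all
  ultimately show "\<exists>c1 c2 :: real. c1 > 0 \<and> c2 > 0 \<and>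
         (\<forall>n::nat. n \<ge> 2 \<longrightarrow>
            c1 * alpha ^ n \<le> real (card (R n)) \<and> real (card (R n)) \<le> c2 * alpha ^ n)"
    by blast
qed

end
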